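(* Let $f\in C(\mathbb{R}^2)$ be $\kappa$-Lipschitz and $\mathbb{Z}^2$-periodic; let $v(\tau;c)$ solve $\dot v=f(v,\tau)$, $v(0)=c$, and let $\bar f=\lim_{k\to\infty}v(k;0)/k$. Then for all $\tau>0$ and $c\in\mathbb{R}$, $|v(\tau;c)-(c+\bar f\tau)|\le 1+2\|f\|_\infty$. Moreover, if $f(r,\tau)$ is independent of $\tau$, then $|v(\tau;c)-(c+\bar f\tau)|\le 1$. *)

theory Defs
  imports "HOL-Analysis.Analysis"
begin

definition sup_norm :: "(real \<times> real \<Rightarrow> real) \<Rightarrow> real" where
  "sup_norm f = (SUP p. \<bar>f p\<bar>)"

end

theory Submission
  imports Defs "HOL-Library.Periodic_Fun"
begin

(*
  Because f is 1-periodic in r, uniqueness of solutions makes every time-t map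
  G\<^sub>t c = v(t;c), t \<ge> 0, a monotone lift of a degree-one circle map: it is nondecreasing
  and commutes with c \<mapsto> c + 1. For such a lift G the displacement G x - x varies by at
  most 1, so G\<^sup>k 0 stays within k of k (G x - x). Hence the rotation number
  \<rho>(G) = lim G\<^sup>k 0 / k exists and |G x - x - \<rho>(G)| \<le> 1.
  Periodicity in time makes G\<^sub>n the n-th iterate of G\<^sub>1, so \<rho>(G\<^sub>n) = n \<rho>(G\<^sub>1)
  and \<rho>(G\<^sub>1) is the limit in the statement; the fractional part of \<tau> then costs at most
  \<parallel>f\<parallel> in v and at most |\<rho>(G\<^sub>1)| \<le> \<parallel>f\<parallel> in the linear term. If f does not depend on
  time, every G\<^sub>\<tau> is such a lift, with \<rho>(G\<^sub>\<tau>) = \<tau> \<rho>(G\<^sub>1), and the bound 1 holds directly.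
*)

definition circle_lift :: "(real \<Rightarrow> real) \<Rightarrow> bool" where
  "circle_lift G \<longleftrightarrow> mono G \<and> (\<forall>x. G (x + 1) = G x + 1)"

definition rotation_number :: "(real \<Rightarrow> real) \<Rightarrow> real" where
  "rotation_number G = lim (\<lambda>k. (G ^^ k) 0 / real k)"

lemma circle_lift_add_of_int:
  assumes "circle_lift G"
  shows "G (x + of_int z) = G x + of_int z"
proof -
  interpret periodic_fun_simple' "\<lambda>x. G x - x"
    by standard (use assms in \<open>simp add: circle_lift_def\<close>)
  show ?thesis using plus_of_int[of x z] by simp
qed

lemma circle_lift_funpow:
  assumes "circle_lift G"
  shows "circle_lift (G ^^ n)"
proof -
  have "(G ^^ n) (x + 1) = (G ^^ n) x + 1" for x
    using assms by (induction n) (simp_all add: circle_lift_def)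
  then show ?thesis using assms by (simp add: circle_lift_def mono_pow)
qed

lemma circle_lift_displacement_oscillation:
  assumes "circle_lift G"
  shows "\<bar>(G y - y) - (G x - x)\<bar> \<le> 1"
proof -
  define y' where "y' = y - of_int \<lfloor>y - x\<rfloor>"
  have "x \<le> y'" "y' \<le> x + 1" unfolding y'_def by linarith+
  then have "G x \<le> G y'" "G y' \<le> G x + 1"
    using assms by (auto simp: circle_lift_def dest: monoD)
  moreover have "G y = G y' + of_int \<lfloor>y - x\<rfloor>"
    using circle_lift_add_of_int[OF assms, of y' "\<lfloor>y - x\<rfloor>"] by (simp add: y'_def)
  ultimately show ?thesis unfolding y'_def by linarith
qed

lemma circle_lift_funpow_displacement:
  assumes "circle_lift G"
  shows "\<bar>(G ^^ k) y - y - real k * (G x - x)\<bar> \<le> real k"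
proof (induction k)
  case 0
  then show ?case by simp
next
  case (Suc k)
  let ?z = "(G ^^ k) y"
  have "(G ^^ Suc k) y - y - real (Suc k) * (G x - x)
        = (?z - y - real k * (G x - x)) + ((G ?z - ?z) - (G x - x))"
    by (simp add: algebra_simps)
  then show ?case
    using Suc circle_lift_displacement_oscillation[OF assms, of ?z x] by linarith
qed

lemma convergent_if_multiples_close:
  fixes q :: "nat \<Rightarrow> real"
  assumes close: "\<And>n m. n \<ge> 1 \<Longrightarrow> m \<ge> 1 \<Longrightarrow> \<bar>q (n * m) - q n\<bar> \<le> 1 / real n"
  shows "convergent q"
proof -
  have dist_le: "dist (q n) (q m) \<le> 1 / real n + 1 / real m" if "n \<ge> 1" "m \<ge> 1" for n m
    using close[OF that] close[OF that(2,1)] by (simp add: dist_real_def mult.commute)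
  have "Cauchy q"
  proof (rule metric_CauchyI)
    fix e :: real assume "e > 0"
    then obtain N :: nat where N: "2 / e < real N" using reals_Archimedean2 by blast
    with \<open>e > 0\<close> have eN: "2 < e * real N" by (simp add: divide_less_eq mult.commute)
    then have "N \<ge> 1" by (cases N) auto
    with eN have "2 / real N < e" by (simp add: divide_less_eq mult.commute)
    have "dist (q m) (q n) < e" if "m \<ge> N" "n \<ge> N" for m n
    proof -
      have "1 / real m \<le> 1 / real N" "1 / real n \<le> 1 / real N"
        using that \<open>N \<ge> 1\<close> by (auto intro!: divide_left_mono)
      then show ?thesis
        using dist_le[of m n] that \<open>N \<ge> 1\<close> \<open>2 / real N < e\<close> by simp
    qed
    then show "\<exists>M. \<forall>m\<ge>M. \<forall>n\<ge>M. dist (q m) (q n) < e" by blast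
  qed
  then show ?thesis by (simp add: Cauchy_convergent_iff)
qed

lemma circle_lift_rotation_number:
  assumes "circle_lift G"
  shows "(\<lambda>k. (G ^^ k) 0 / real k) \<longlonglongrightarrow> rotation_number G"
proof -
  have "\<bar>(G ^^ (n * m)) 0 / real (n * m) - (G ^^ n) 0 / real n\<bar> \<le> 1 / real n"
    if "n \<ge> 1" "m \<ge> 1" for n m
  proof -
    define d where "d = (G ^^ (n * m)) 0 - real m * (G ^^ n) 0"
    have "\<bar>d\<bar> \<le> real m"
      using circle_lift_funpow_displacement[OF circle_lift_funpow[OF assms, of n], of m 0 0]
      by (simp add: d_def funpow_mult)
    then have "\<bar>d\<bar> / (real m * real n) \<le> real m / (real m * real n)"
      by (intro divide_right_mono) auto
    moreover have "(G ^^ (n * m)) 0 / real (n * m) - (G ^^ n) 0 / real n = d / (real m * real n)"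
      using that by (simp add: d_def field_simps)
    ultimately show ?thesis using that by simp
  qed
  then have "convergent (\<lambda>k. (G ^^ k) 0 / real k)"
    by (rule convergent_if_multiples_close)
  then show ?thesis by (simp add: rotation_number_def convergent_LIMSEQ_iff)
qed

lemma tendsto_multiple_index:
  fixes a :: "nat \<Rightarrow> real"
  assumes "(\<lambda>k. a k / real k) \<longlonglongrightarrow> L"
  shows "(\<lambda>k. a (k * n) / real k) \<longlonglongrightarrow> real n * L"
proof (cases "n = 0")
  case True
  then show ?thesis using lim_const_over_n[of "a 0"] by simp
next
  case False
  have "strict_mono (\<lambda>k. k * n)" using False by (simp add: strict_mono_def)
  from LIMSEQ_subseq_LIMSEQ[OF assms this]
  have "(\<lambda>k. real n * (a (k * n) / real (k * n))) \<longlonglongrightarrow> real n * L"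
    by (intro tendsto_mult tendsto_const) (simp add: o_def)
  with False show ?thesis by simp
qed

lemma rotation_number_funpow:
  assumes "circle_lift G"
  shows "rotation_number (G ^^ n) = real n * rotation_number G"
  using tendsto_multiple_index[OF circle_lift_rotation_number[OF assms], of n]
  by (simp add: rotation_number_def funpow_mult mult.commute limI)

lemma circle_lift_displacement_rotation_number:
  assumes "circle_lift G"
  shows "\<bar>G x - x - rotation_number G\<bar> \<le> 1"
proof -
  have "(\<lambda>k. \<bar>(G ^^ k) 0 / real k - (G x - x)\<bar>) \<longlonglongrightarrow> \<bar>rotation_number G - (G x - x)\<bar>"
    by (intro tendsto_intros circle_lift_rotation_number[OF assms])
  moreover have "\<bar>(G ^^ k) 0 / real k - (G x - x)\<bar> \<le> 1" if "k \<ge> 1" for k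
  proof -
    have "\<bar>(G ^^ k) 0 - real k * (G x - x)\<bar> \<le> real k"
      using circle_lift_funpow_displacement[OF assms, of k 0 x] by simp
    moreover have "(G ^^ k) 0 / real k - (G x - x) = ((G ^^ k) 0 - real k * (G x - x)) / real k"
      using that by (simp add: field_simps)
    ultimately show ?thesis using that by simp
  qed
  ultimately have "\<bar>rotation_number G - (G x - x)\<bar> \<le> 1"
    by (intro tendsto_upperbound[of _ _ sequentially]) (auto simp: eventually_sequentially)
  then show ?thesis by linarith
qed

lemma ode_forward_unique:
  fixes f :: "real \<times> real \<Rightarrow> real" and x y :: "real \<Rightarrow> real"
  assumes lipschitz: "\<And>a b t. \<bar>f (a, t) - f (b, t)\<bar> \<le> K * \<bar>a - b\<bar>"
    and x: "\<And>t. (x has_real_derivative f (x t, t)) (at t)"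
    and y: "\<And>t. (y has_real_derivative f (y t, t)) (at t)"
    and "x s = y s" and "s \<le> t"
  shows "x t = y t"
proof -
  define w where "w u = (x u - y u)\<^sup>2 * exp (-2 * K * u)" for u
  have "w t \<le> w s"
  proof (rule DERIV_nonpos_imp_nonincreasing[OF \<open>s \<le> t\<close>])
    fix u
    let ?d = "x u - y u" and ?e = "f (x u, u) - f (y u, u)"
    have "?d * ?e \<le> \<bar>?d\<bar> * \<bar>?e\<bar>" by (metis abs_ge_self abs_mult)
    also have "\<dots> \<le> \<bar>?d\<bar> * (K * \<bar>?d\<bar>)" by (intro mult_left_mono lipschitz) simp
    also have "\<dots> = K * ?d\<^sup>2" by (simp add: power2_eq_square)
    finally have "?d * ?e \<le> K * ?d\<^sup>2" .
    then have "2 * exp (-2 * K * u) * (?d * ?e - K * ?d\<^sup>2) \<le> 0"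
      by (intro mult_nonneg_nonpos) auto
    moreover have "(w has_real_derivative 2 * exp (-2 * K * u) * (?d * ?e - K * ?d\<^sup>2)) (at u)"
      unfolding w_def by (rule derivative_eq_intros x y refl | simp add: algebra_simps)+
    ultimately show "\<exists>y. (w has_real_derivative y) (at u) \<and> y \<le> 0" by blast
  qed
  with \<open>x s = y s\<close> have "(x t - y t)\<^sup>2 * exp (-2 * K * t) \<le> 0" by (simp add: w_def)
  then show ?thesis by (simp add: mult_le_0_iff)
qed

lemma abs_le_sup_norm_if_periodic:
  fixes f :: "real \<times> real \<Rightarrow> real"
  assumes cont: "continuous_on UNIV f"
    and per1: "\<And>r t. f (r + 1, t) = f (r, t)" and per2: "\<And>r t. f (r, t + 1) = f (r, t)"
  shows "\<bar>f p\<bar> \<le> sup_norm f"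
proof -
  have reduce: "f (r, t) = f (frac r, frac t)" for r t
  proof -
    interpret space: periodic_fun_simple' "\<lambda>r. f (r, t)" by standard (rule per1)
    interpret time: periodic_fun_simple' "\<lambda>t. f (frac r, t)" by standard (rule per2)
    have "f (r, t) = f (frac r, t)"
      using space.plus_of_int[of "frac r" "\<lfloor>r\<rfloor>"] by (simp add: frac_def)
    also have "\<dots> = f (frac r, frac t)"
      using time.plus_of_int[of "frac t" "\<lfloor>t\<rfloor>"] by (simp add: frac_def)
    finally show ?thesis .
  qed
  have "range (\<lambda>p. \<bar>f p\<bar>) \<subseteq> (\<lambda>p. \<bar>f p\<bar>) ` ({0..1} \<times> {0..1})"
  proof clarify
    fix r t :: real
    have "(frac r, frac t) \<in> {0..1} \<times> {0..1}" by (simp add: less_imp_le frac_lt_1)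
    then show "\<bar>f (r, t)\<bar> \<in> (\<lambda>p. \<bar>f p\<bar>) ` ({0..1} \<times> {0..1})" by (subst reduce) blast
  qed
  moreover have "compact ((\<lambda>p. \<bar>f p\<bar>) ` ({0..1} \<times> {0..1}))"
    by (intro compact_continuous_image compact_Times compact_Icc continuous_intros
        continuous_on_subset[OF cont]) simp
  ultimately have "bdd_above (range (\<lambda>p. \<bar>f p\<bar>))"
    by (meson bdd_above_mono bounded_imp_bdd_above compact_imp_bounded)
  then show ?thesis unfolding sup_norm_def by (rule cSUP_upper[OF UNIV_I])
qed

lemma tendsto_div_of_bounded_deviation:
  fixes x :: "nat \<Rightarrow> real"
  assumes "\<And>k. \<bar>x k - real k * L\<bar> \<le> C"
  shows "(\<lambda>k. x k / real k) \<longlonglongrightarrow> L"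
proof -
  have "(\<lambda>k. (x k - real k * L) / real k) \<longlonglongrightarrow> 0"
  proof (rule Lim_null_comparison)
    show "\<forall>\<^sub>F k in sequentially. norm ((x k - real k * L) / real k) \<le> C / real k"
      using assms by (simp add: divide_right_mono)
  qed (rule lim_const_over_n)
  then have "(\<lambda>k. (x k - real k * L) / real k + L) \<longlonglongrightarrow> L"
    using tendsto_add[OF _ tendsto_const] by fastforce
  moreover have "\<forall>\<^sub>F k in sequentially. (x k - real k * L) / real k + L = x k / real k"
    by (rule eventually_sequentiallyI[of 1]) (simp add: field_simps)
  ultimately show ?thesis by (rule Lim_transform_eventually)
qed

locale lipschitz_flow =
  fixes f :: "real \<times> real \<Rightarrow> real" and K :: real and v :: "real \<Rightarrow> real \<Rightarrow> real"
  assumes lipschitz: "\<And>a b t. \<bar>f (a, t) - f (b, t)\<bar> \<le> K * \<bar>a - b\<bar>"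
    and periodic_space: "\<And>r t. f (r + 1, t) = f (r, t)"
    and flow_0: "\<And>c. v c 0 = c"
    and flow_deriv: "\<And>c t. (v c has_real_derivative f (v c t, t)) (at t)"
begin

lemma flow_add_one:
  assumes "t \<ge> 0"
  shows "v (c + 1) t = v c t + 1"
proof -
  have "((\<lambda>t. v c t + 1) has_real_derivative f (v c t + 1, t)) (at t)" for t
    using flow_deriv[of c t] periodic_space[of "v c t" t] by (auto intro!: derivative_eq_intros)
  from ode_forward_unique[OF lipschitz flow_deriv[of "c + 1"] this, of 0 t] assms show ?thesis
    by (simp add: flow_0)
qed

lemma flow_mono:
  assumes "c \<le> d" and "t \<ge> 0"
  shows "v c t \<le> v d t"
proof (rule ccontr)
  assume "\<not> v c t \<le> v d t"
  have "continuous_on {0..t} (\<lambda>u. v d u - v c u)"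
    using flow_deriv[THEN DERIV_isCont] by (intro continuous_at_imp_continuous_on continuous_intros) auto
  then have "\<exists>s. 0 \<le> s \<and> s \<le> t \<and> v d s - v c s = 0"
    by (rule IVT2'[rotated 3]) (use assms \<open>\<not> v c t \<le> v d t\<close> in \<open>simp_all add: flow_0\<close>)
  then obtain s where "v d s = v c s" "s \<le> t" by auto
  then have "v d t = v c t" by (rule ode_forward_unique[OF lipschitz flow_deriv[of d] flow_deriv[of c]])
  with \<open>\<not> v c t \<le> v d t\<close> show False by simp
qed

lemma flow_map_circle_lift:
  assumes "t \<ge> 0"
  shows "circle_lift (\<lambda>c. v c t)"
  by (simp add: circle_lift_def mono_def flow_mono flow_add_one assms)

lemma flow_shift:
  assumes periodic: "\<And>r u. f (r, u + T) = f (r, u)" and "t \<ge> 0"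
  shows "v c (t + T) = v (v c T) t"
proof -
  have "((\<lambda>t. v c (t + T)) has_real_derivative f (v c (t + T), t)) (at t)" for t
    using flow_deriv[of c "t + T"] periodic[of "v c (t + T)" t] DERIV_shift by metis
  from ode_forward_unique[OF lipschitz this flow_deriv[of "v c T"], of 0 t] assms show ?thesis
    by (simp add: flow_0)
qed

lemma flow_map_funpow:
  assumes "\<And>r u. f (r, u + T) = f (r, u)" and "T \<ge> 0"
  shows "((\<lambda>c. v c T) ^^ k) c = v c (real k * T)"
proof (induction k arbitrary: c)
  case 0
  show ?case by (simp add: flow_0)
next
  case (Suc k)
  have "((\<lambda>c. v c T) ^^ Suc k) c = v (v c T) (real k * T)"
    by (simp add: funpow_Suc_right Suc del: funpow.simps)
  also have "\<dots> = v c (real (Suc k) * T)"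
    using flow_shift[OF assms(1), of "real k * T" c] assms(2) by (simp add: algebra_simps)
  finally show ?case .
qed

lemma flow_lipschitz_time:
  assumes "\<And>p. \<bar>f p\<bar> \<le> B"
  shows "\<bar>v c t - v c s\<bar> \<le> B * \<bar>t - s\<bar>"
  using field_differentiable_bound[where S=UNIV and f="v c" and f'="\<lambda>u. f (v c u, u)"]
    flow_deriv assms by simp

end

locale bounded_periodic_flow = lipschitz_flow +
  fixes B :: real
  assumes bounded: "\<And>p. \<bar>f p\<bar> \<le> B"
    and periodic_time: "\<And>r t. f (r, t + 1) = f (r, t)"
begin

lemma flow_at_nat_div_tendsto:
  "(\<lambda>k. v 0 (real k) / real k) \<longlonglongrightarrow> rotation_number (\<lambda>c. v c 1)"
  using circle_lift_rotation_number[OF flow_map_circle_lift[of 1]]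
    flow_map_funpow[of 1, OF periodic_time] by simp

lemma abs_rotation_number_le: "\<bar>rotation_number (\<lambda>c. v c 1)\<bar> \<le> B"
proof (rule tendsto_upperbound[of _ _ sequentially])
  show "(\<lambda>k. \<bar>v 0 (real k) / real k\<bar>) \<longlonglongrightarrow> \<bar>rotation_number (\<lambda>c. v c 1)\<bar>"
    by (intro tendsto_intros flow_at_nat_div_tendsto)
  have "\<bar>v 0 (real k)\<bar> \<le> B * real k" for k
    using flow_lipschitz_time[OF bounded, of 0 "real k" 0] by (simp add: flow_0)
  then show "\<forall>\<^sub>F k in sequentially. \<bar>v 0 (real k) / real k\<bar> \<le> B"
    by (intro eventually_sequentiallyI[of 1]) (simp add: divide_le_eq)
qed simp

lemma flow_deviation_at_nat:
  "\<bar>v c (real n) - c - real n * rotation_number (\<lambda>c. v c 1)\<bar> \<le> 1"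
  using circle_lift_displacement_rotation_number[OF circle_lift_funpow[OF flow_map_circle_lift[of 1]]]
    rotation_number_funpow[OF flow_map_circle_lift[of 1]] flow_map_funpow[of 1, OF periodic_time]
  by simp

lemma flow_deviation:
  assumes "t \<ge> 0"
  shows "\<bar>v c t - (c + rotation_number (\<lambda>c. v c 1) * t)\<bar> \<le> 1 + 2 * B"
proof -
  let ?\<rho> = "rotation_number (\<lambda>c. v c 1)"
  define n where "n = nat \<lfloor>t\<rfloor>"
  define s where "s = t - real n"
  have s: "0 \<le> s" "s \<le> 1" using assms by (simp_all add: s_def n_def) linarith+
  have "\<bar>v c t - v c (real n)\<bar> \<le> B * s"
    using flow_lipschitz_time[OF bounded, of c t "real n"] s by (simp add: s_def)
  moreover have "\<bar>s * ?\<rho>\<bar> \<le> s * B"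
    using abs_rotation_number_le s by (simp add: abs_mult mult_left_mono)
  moreover have "B * s \<le> B" "s * B \<le> B"
    using s bounded[of 0] by (simp_all add: mult_left_le_one_le mult_left_le)
  moreover have "v c t - (c + ?\<rho> * t)
      = (v c t - v c (real n)) + (v c (real n) - c - real n * ?\<rho>) - s * ?\<rho>"
    by (simp add: s_def algebra_simps)
  ultimately show ?thesis
    using flow_deviation_at_nat[of c n] by linarith
qed

lemma autonomous_flow_deviation:
  assumes autonomous: "\<And>r t s. f (r, t) = f (r, s)" and "t \<ge> 0"
  shows "\<bar>v c t - (c + rotation_number (\<lambda>c. v c 1) * t)\<bar> \<le> 1"
proof -
  let ?\<rho> = "rotation_number (\<lambda>c. v c 1)"
  have periodic: "f (r, u + t) = f (r, u)" for r u by (rule autonomous)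
  have "(\<lambda>k. v 0 (real k * t) / real k) \<longlonglongrightarrow> t * ?\<rho>"
    using flow_deviation[of "real k * t" 0 for k] \<open>t \<ge> 0\<close>
    by (intro tendsto_div_of_bounded_deviation[where C = "1 + 2 * B"]) (simp add: algebra_simps)
  then have "rotation_number (\<lambda>c. v c t) = t * ?\<rho>"
    by (simp add: rotation_number_def flow_map_funpow[OF periodic \<open>t \<ge> 0\<close>] limI)
  with circle_lift_displacement_rotation_number[OF flow_map_circle_lift[OF \<open>t \<ge> 0\<close>], of c]
  show ?thesis by (simp add: algebra_simps)
qed

end

theorem lemma2p4:
  fixes f :: "real \<times> real \<Rightarrow> real" and \<kappa> :: real
    and v :: "real \<Rightarrow> real \<Rightarrow> real"
  assumes cont: "continuous_on UNIV f"
    and lip: "\<kappa>-lipschitz_on UNIV f"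
    and per1: "\<And>r t. f (r + 1, t) = f (r, t)"
    and per2: "\<And>r t. f (r, t + 1) = f (r, t)"
    and init: "\<And>c. v c 0 = c"
    and ode: "\<And>c t. (v c has_real_derivative f (v c t, t)) (at t)"
  shows "(\<forall>\<tau>>0. \<forall>c. \<bar>v c \<tau> - (c + lim (\<lambda>k::nat. v 0 (real k) / real k) * \<tau>)\<bar>
            \<le> 1 + 2 * sup_norm f)
       \<and> ((\<forall>r t s. f (r, t) = f (r, s)) \<longrightarrow>
          (\<forall>\<tau>>0. \<forall>c. \<bar>v c \<tau> - (c + lim (\<lambda>k::nat. v 0 (real k) / real k) * \<tau>)\<bar> \<le> 1))"
proof -
  have lipschitz: "\<bar>f (a, t) - f (b, t)\<bar> \<le> \<kappa> * \<bar>a - b\<bar>" for a b t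
    using lipschitz_onD[OF lip, of "(a, t)" "(b, t)"] by (simp add: dist_Pair_Pair dist_real_def)
  interpret bounded_periodic_flow f \<kappa> v "sup_norm f"
    by unfold_locales
      (rule lipschitz per1 per2 init ode abs_le_sup_norm_if_periodic[OF cont per1 per2])+
  have "lim (\<lambda>k. v 0 (real k) / real k) = rotation_number (\<lambda>c. v c 1)"
    using flow_at_nat_div_tendsto by (rule limI)
  then show ?thesis
    using flow_deviation autonomous_flow_deviation by auto
qed

end
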